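(* Let $G$ be a $2$-connected planar graph embedded in the plane (so every face boundary is a cycle), and let $(G,H,r,c)$ be a multiflow instance. Let $s_1t_1$ and $s_2t_2$ be two demand edges of $H$ whose four distinct endpoints lie on the boundary of the same face of $G$ and appear around that face boundary in the cyclic order $s_1,s_2,t_1,t_2$. Let $m=\min\{r(s_1t_1),r(s_2t_2)\}$ and define $r'$ on pairs of vertices by $r'(s_1t_1)=r(s_1t_1)-m$, $r'(s_2t_2)=r(s_2t_2)-m$, $r'(s_1s_2)=r(s_1s_2)+m$, $r'(t_1t_2)=r(t_1t_2)+m$, and $r'(uv)=r(uv)$ for every other pair (where $r(uv)=0$ if $uv\notin E(H)$); let $H'=\{uv : r'(uv)>0\}$. If $(G,H,r,c)$ satisfies the cut condition, then so does $(G,H',r',c)$.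
   Context: A multiflow instance $(G,H,r,c)$ consists of a supply graph $G$, a demand graph $H$ on $V(G)$, nonnegative capacities $c$ on $E(G)$ and positive requests $r$ on $E(H)$. It satisfies the cut condition if for every $X\subseteq V(G)$, $\sum_{e\in\delta_G(X)} c(e)\ge \sum_{h\in\delta_H(X)} r(h)$. *)

theory Defs
  imports "HOL-Analysis.Analysis"
begin

text \<open>A supply graph: vertex set V, edge set E (abstract edges, parallel edges allowed),
  and an incidence function ends assigning to each edge its two distinct endpoints.\<close>

definition graph :: "'a set \<Rightarrow> 'e set \<Rightarrow> ('e \<Rightarrow> 'a set) \<Rightarrow> bool" where
  "graph V E ends \<longleftrightarrow> finite V \<and> finite E \<and>
     (\<forall>e\<in>E. ends e \<subseteq> V \<and> card (ends e) = 2)"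

inductive reach :: "'a set \<Rightarrow> 'e set \<Rightarrow> ('e \<Rightarrow> 'a set) \<Rightarrow> 'a \<Rightarrow> 'a \<Rightarrow> bool"
  for W E ends where
  refl: "u \<in> W \<Longrightarrow> reach W E ends u u"
| step: "reach W E ends u v \<Longrightarrow> e \<in> E \<Longrightarrow> ends e = {v, w} \<Longrightarrow> ends e \<subseteq> W
          \<Longrightarrow> reach W E ends u w"

definition connected_on :: "'a set \<Rightarrow> 'e set \<Rightarrow> ('e \<Rightarrow> 'a set) \<Rightarrow> bool" where
  "connected_on W E ends \<longleftrightarrow> W \<noteq> {} \<and> (\<forall>u\<in>W. \<forall>v\<in>W. reach W E ends u v)"

definition two_connected :: "'a set \<Rightarrow> 'e set \<Rightarrow> ('e \<Rightarrow> 'a set) \<Rightarrow> bool" where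
  "two_connected V E ends \<longleftrightarrow> card V \<ge> 3 \<and> connected_on V E ends \<and>
     (\<forall>x\<in>V. connected_on (V - {x}) E ends)"

definition plane_embedding ::
  "'a set \<Rightarrow> 'e set \<Rightarrow> ('e \<Rightarrow> 'a set) \<Rightarrow> ('a \<Rightarrow> complex) \<Rightarrow> ('e \<Rightarrow> real \<Rightarrow> complex) \<Rightarrow> bool" where
  "plane_embedding V E ends p gam \<longleftrightarrow>
     inj_on p V \<and>
     (\<forall>e\<in>E. arc (gam e) \<and>
        (\<exists>u v. ends e = {u, v} \<and> pathstart (gam e) = p u \<and> pathfinish (gam e) = p v) \<and>
        path_image (gam e) \<inter> p ` V \<subseteq> p ` ends e) \<and>
     (\<forall>e\<in>E. \<forall>f\<in>E. e \<noteq> f \<longrightarrow> path_image (gam e) \<inter> path_image (gam f) \<subseteq> p ` (ends e \<inter> ends f))"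

definition drawing ::
  "'a set \<Rightarrow> 'e set \<Rightarrow> ('a \<Rightarrow> complex) \<Rightarrow> ('e \<Rightarrow> real \<Rightarrow> complex) \<Rightarrow> complex set" where
  "drawing V E p gam = p ` V \<union> (\<Union>e\<in>E. path_image (gam e))"

definition faces ::
  "'a set \<Rightarrow> 'e set \<Rightarrow> ('a \<Rightarrow> complex) \<Rightarrow> ('e \<Rightarrow> real \<Rightarrow> complex) \<Rightarrow> complex set set" where
  "faces V E p gam = components (- drawing V E p gam)"

definition is_cycle :: "'a set \<Rightarrow> 'e set \<Rightarrow> ('e \<Rightarrow> 'a set) \<Rightarrow> 'a list \<Rightarrow> 'e list \<Rightarrow> bool" where
  "is_cycle V E ends vs es \<longleftrightarrow>
     length vs \<ge> 3 \<and> length es = length vs \<and> distinct vs \<and> distinct es \<and>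
     set vs \<subseteq> V \<and> set es \<subseteq> E \<and>
     (\<forall>i < length vs. ends (es ! i) = {vs ! i, vs ! ((i + 1) mod length vs)})"

definition face_boundary_cycle ::
  "('e \<Rightarrow> real \<Rightarrow> complex) \<Rightarrow> complex set \<Rightarrow> 'e list \<Rightarrow> bool" where
  "face_boundary_cycle gam F es \<longleftrightarrow> frontier F = (\<Union>e\<in>set es. path_image (gam e))"

definition cyclic_order4 :: "'a list \<Rightarrow> 'a \<Rightarrow> 'a \<Rightarrow> 'a \<Rightarrow> 'a \<Rightarrow> bool" where
  "cyclic_order4 vs a b c d \<longleftrightarrow>
     (\<exists>n i j k l. i < j \<and> j < k \<and> k < l \<and> l < length vs \<and>
        rotate n vs ! i = a \<and> rotate n vs ! j = b \<and> rotate n vs ! k = c \<and> rotate n vs ! l = d)"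

definition multiflow_instance ::
  "'a set \<Rightarrow> 'e set \<Rightarrow> ('e \<Rightarrow> 'a set) \<Rightarrow> 'a set set \<Rightarrow> ('a set \<Rightarrow> real) \<Rightarrow> ('e \<Rightarrow> real) \<Rightarrow> bool" where
  "multiflow_instance V E ends H r c \<longleftrightarrow>
     graph V E ends \<and>
     (\<forall>h\<in>H. \<exists>u v. u \<in> V \<and> v \<in> V \<and> u \<noteq> v \<and> h = {u, v}) \<and>
     (\<forall>e\<in>E. c e \<ge> 0) \<and> (\<forall>h\<in>H. r h > 0)"

definition delta_G :: "'e set \<Rightarrow> ('e \<Rightarrow> 'a set) \<Rightarrow> 'a set \<Rightarrow> 'e set" where
  "delta_G E ends X = {e \<in> E. card (ends e \<inter> X) = 1}"

definition delta_H :: "'a set set \<Rightarrow> 'a set \<Rightarrow> 'a set set" where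
  "delta_H H X = {h \<in> H. card (h \<inter> X) = 1}"

definition cut_condition ::
  "'a set \<Rightarrow> 'e set \<Rightarrow> ('e \<Rightarrow> 'a set) \<Rightarrow> 'a set set \<Rightarrow> ('a set \<Rightarrow> real) \<Rightarrow> ('e \<Rightarrow> real) \<Rightarrow> bool" where
  "cut_condition V E ends H r c \<longleftrightarrow>
     (\<forall>X. X \<subseteq> V \<longrightarrow> (\<Sum>e\<in>delta_G E ends X. c e) \<ge> (\<Sum>h\<in>delta_H H X. r h))"

definition ext_req :: "'a set set \<Rightarrow> ('a set \<Rightarrow> real) \<Rightarrow> 'a set \<Rightarrow> real" where
  "ext_req H r uv = (if uv \<in> H then r uv else 0)"

definition swap_req :: "'a set set \<Rightarrow> ('a set \<Rightarrow> real) \<Rightarrow> 'a \<Rightarrow> 'a \<Rightarrow> 'a \<Rightarrow> 'a \<Rightarrow> 'a set \<Rightarrow> real" where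
  "swap_req H r s1 t1 s2 t2 uv =
     (let m = min (r {s1, t1}) (r {s2, t2}) in
      if uv = {s1, t1} then ext_req H r uv - m
      else if uv = {s2, t2} then ext_req H r uv - m
      else if uv = {s1, s2} then ext_req H r uv + m
      else if uv = {t1, t2} then ext_req H r uv + m
      else ext_req H r uv)"

definition pos_pairs :: "'a set \<Rightarrow> ('a set \<Rightarrow> real) \<Rightarrow> 'a set set" where
  "pos_pairs V r' = {uv. (\<exists>u v. u \<in> V \<and> v \<in> V \<and> u \<noteq> v \<and> uv = {u, v}) \<and> r' uv > 0}"

end

theory Submission
  imports Defs
begin

text \<open>
  Write m = min(r{s1,t1}, r{s2,t2}). For a vertex set X, the demand of r' across X differs from
  that of r by m times (number of crossing pairs among {s1,s2}, {t1,t2}) minus (number among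
  {s1,t1}, {s2,t2}). This balance is at most 2, and positive only if X separates {s1,t1} from
  {s2,t2}; so only such separating cuts need a surplus of 2m over the old demand.

  That surplus comes from planarity. Since s1, s2, t1, t2 lie in this cyclic order on a face
  boundary, s1 and t1 cannot be connected inside X while s2 and t2 are connected inside V - X:
  the two walks would be drawn as disjoint paths, the first splitting the face boundary into two
  pieces and the second joining them outside the face, which Janiszewski's theorem forbids. And
  if a demand pair {a, b} with both ends in Y is disconnected inside Y, applying the cut condition
  to the part of Y reachable from a and to the rest shows that the cut of Y has surplus 2 r{a,b}.
\<close>

section \<open>Planar topology\<close>

text \<open>A path running from a compact set u to a compact set d, and meeting u \<inter> d nowhere,
  contains a connected stretch S avoiding u \<union> d whose closure touches a point of u and a point
  of d (the stretch between the last visit of u and the next visit of d).\<close>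

lemma path_stretch_between:
  fixes g :: "real \<Rightarrow> 'a::metric_space"
  assumes cu: "compact u" and cd: "compact d" and pg: "path g"
    and start: "pathstart g \<in> u" and finish: "pathfinish g \<in> d"
    and avoid: "path_image g \<inter> u \<inter> d = {}"
  obtains S x y where "connected S" "S \<noteq> {}" "S \<subseteq> path_image g" "S \<inter> (u \<union> d) = {}"
    "x \<in> u" "x \<in> path_image g" "x \<in> closure S"
    "y \<in> d" "y \<in> path_image g" "y \<in> closure S"
proof -
  have cont: "continuous_on {0..1} g" using pg by (simp add: path_def)
  have img: "g t \<in> path_image g" if "0 \<le> t" "t \<le> 1" for t
    using that by (auto simp: path_image_def)
  define Tu where "Tu = {0..1} \<inter> g -` u"
  have "closed Tu" unfolding Tu_def
    by (rule continuous_closed_preimage[OF cont]) (auto simp: cu compact_imp_closed)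
  hence "compact Tu" by (simp add: Tu_def bounded_Int compact_eq_bounded_closed)
  moreover have "0 \<in> Tu" using start by (simp add: Tu_def pathstart_def)
  ultimately obtain t0 where t0: "t0 \<in> Tu" "\<And>t. t \<in> Tu \<Longrightarrow> t \<le> t0"
    using compact_attains_sup[of Tu] by blast
  have t0_bounds: "0 \<le> t0" "t0 \<le> 1" "g t0 \<in> u" using t0(1) by (auto simp: Tu_def)
  define Td where "Td = {t0..1} \<inter> g -` d"
  have "closed Td" unfolding Td_def
    by (rule continuous_closed_preimage[OF continuous_on_subset[OF cont]])
       (use t0_bounds cd compact_imp_closed in auto)
  hence "compact Td" by (simp add: Td_def bounded_Int compact_eq_bounded_closed)
  moreover have "1 \<in> Td" using finish t0_bounds by (simp add: Td_def pathfinish_def)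
  ultimately obtain t1 where t1: "t1 \<in> Td" "\<And>t. t \<in> Td \<Longrightarrow> t1 \<le> t"
    using compact_attains_inf[of Td] by blast
  have t1_bounds: "t0 \<le> t1" "t1 \<le> 1" "g t1 \<in> d" using t1(1) by (auto simp: Td_def)
  have x_in: "g t0 \<in> path_image g" and y_in: "g t1 \<in> path_image g"
    using img t0_bounds t1_bounds by auto
  have "g t0 \<notin> d" using avoid x_in t0_bounds by blast
  hence lt: "t0 < t1" using t0_bounds t1_bounds by (metis order_le_less)
  define S where "S = g ` {t0<..<t1}"
  show thesis
  proof
    show "connected S" unfolding S_def
      by (rule connected_continuous_image[OF continuous_on_subset[OF cont]])
         (use t0_bounds t1_bounds in auto)
    show "S \<noteq> {}" using lt by (simp add: S_def)
    show "S \<subseteq> path_image g" using t0_bounds t1_bounds img by (auto simp: S_def)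
    show "S \<inter> (u \<union> d) = {}"
    proof -
      have "g t \<notin> u \<and> g t \<notin> d" if "t0 < t" "t < t1" for t
      proof -
        have "t \<notin> Tu" using that t0(2) by force
        moreover have "t \<notin> Td" using that t1(2) by force
        ultimately show ?thesis using that t0_bounds t1_bounds by (auto simp: Tu_def Td_def)
      qed
      thus ?thesis by (auto simp: S_def)
    qed
    have cont_t: "continuous_on {t0..t1} g"
      by (rule continuous_on_subset[OF cont]) (use t0_bounds t1_bounds in auto)
    have "g ` closure {t0<..<t1} \<subseteq> closure S" unfolding S_def
      by (rule image_closure_subset)
         (use cont_t lt in \<open>auto intro: closure_subset[THEN subsetD]\<close>)
    thus "g t0 \<in> closure S" "g t1 \<in> closure S" using lt by auto
  qed (use t0_bounds t1_bounds x_in y_in in auto)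
qed

text \<open>The planar core (via Janiszewski's theorem). Let the frontier of a connected region F be
  split into compact pieces u and d that meet only on a path g avoiding F. Then no connected
  set S outside F \<union> path_image g can bridge u - d and d - u: otherwise F and S would lie in a
  common component of the complements of both u \<union> g and d \<union> g, hence of u \<union> d, although F and S
  are separated by the frontier u \<union> d of F.\<close>

lemma frontier_pieces_not_bridged:
  fixes F u d S :: "complex set" and g :: "real \<Rightarrow> complex"
  assumes cu: "compact u" and cd: "compact d" and pg: "path g"
    and ud: "u \<inter> d \<subseteq> path_image g"
    and fr: "frontier F = u \<union> d" and conF: "connected F" and neF: "F \<noteq> {}"
    and Fud: "F \<inter> (u \<union> d) = {}" and Fg: "F \<inter> path_image g = {}"
    and conS: "connected S" and neS: "S \<noteq> {}"
    and Sud: "S \<inter> (u \<union> d) = {}" and Sg: "S \<inter> path_image g = {}" and SF: "S \<inter> F = {}"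
    and x: "x \<in> u" "x \<notin> path_image g" "x \<in> closure S"
    and y: "y \<in> d" "y \<notin> path_image g" "y \<in> closure S"
  shows False
proof -
  obtain w where w: "w \<in> F" using neF by auto
  obtain q where q: "q \<in> S" using neS by auto
  have clF: "u \<union> d \<subseteq> closure F" using fr by (auto simp: frontier_def)
  have separated: "\<not> connected_component (- (u \<union> d)) w q"
  proof
    assume "connected_component (- (u \<union> d)) w q"
    then obtain Z where Z: "connected Z" "Z \<subseteq> - (u \<union> d)" "w \<in> Z" "q \<in> Z"
      by (auto simp: connected_component_def)
    have "Z \<inter> frontier F \<noteq> {}"
      by (rule connected_Int_frontier) (use Z w q SF in auto)
    thus False using Z fr by auto
  qed
  \<comment> \<open>F and S are joined through a small ball around a common closure point z \<notin> K \<union> g\<close>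
  have joined: "connected_component (- (K \<union> path_image g)) w q"
    if cK: "compact K" and zK: "z \<notin> K" and zg: "z \<notin> path_image g" and zF: "z \<in> closure F"
      and zS: "z \<in> closure S" and KF: "F \<inter> K = {}" and KS: "S \<inter> K = {}" for K z
  proof -
    have "closed (K \<union> path_image g)"
      using cK pg by (simp add: compact_imp_closed compact_path_image closed_Un)
    hence "open (- (K \<union> path_image g))" by (rule open_Compl)
    then obtain e where e: "e > 0" "ball z e \<subseteq> - (K \<union> path_image g)"
      using zK zg open_contains_ball by blast
    have "ball z e \<inter> F \<noteq> {}" "ball z e \<inter> S \<noteq> {}"
      using open_Int_closure_eq_empty[of "ball z e"] zF zS e(1) centre_in_ball[of z e] by blast+
    hence "connected (F \<union> ball z e \<union> S)" using conF conS by (intro connected_Un) auto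
    moreover have "F \<union> ball z e \<union> S \<subseteq> - (K \<union> path_image g)" using e KF KS Fg Sg by auto
    ultimately show ?thesis using w q by (auto simp: connected_component_def)
  qed
  have "x \<notin> d" "y \<notin> u" using x y ud by auto
  hence "connected_component (- (u \<union> path_image g)) w q"
    "connected_component (- (d \<union> path_image g)) w q"
    using joined[of u y] joined[of d x] cu cd x y clF Fud Sud by auto
  moreover have "(u \<union> path_image g) \<inter> (d \<union> path_image g) = path_image g" using ud by auto
  ultimately have "connected_component (- ((u \<union> path_image g) \<union> (d \<union> path_image g))) w q"
    using Janiszewski[of "u \<union> path_image g" "d \<union> path_image g" w q] cu cd pg
    by (auto simp: connected_path_image compact_Un compact_path_image compact_imp_closed)
  hence "connected_component (- (u \<union> d)) w q"
    by (rule connected_component_of_subset) auto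
  with separated show False by blast
qed

lemma no_second_chord:
  fixes F u d :: "complex set" and g1 g2 :: "real \<Rightarrow> complex"
  assumes cu: "compact u" and cd: "compact d" and p1: "path g1" and p2: "path g2"
    and ud: "u \<inter> d \<subseteq> path_image g1"
    and fr: "frontier F = u \<union> d" and conF: "connected F" and neF: "F \<noteq> {}"
    and Fud: "F \<inter> (u \<union> d) = {}"
    and F1: "F \<inter> path_image g1 = {}" and F2: "F \<inter> path_image g2 = {}"
    and disj: "path_image g1 \<inter> path_image g2 = {}"
    and start: "pathstart g2 \<in> u" and finish: "pathfinish g2 \<in> d"
  shows False
proof -
  have "path_image g2 \<inter> u \<inter> d = {}" using ud disj by auto
  then obtain S x y where S: "connected S" "S \<noteq> {}" "S \<subseteq> path_image g2" "S \<inter> (u \<union> d) = {}"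
    and x: "x \<in> u" "x \<in> path_image g2" "x \<in> closure S"
    and y: "y \<in> d" "y \<in> path_image g2" "y \<in> closure S"
    using path_stretch_between[OF cu cd p2 start finish] by metis
  show False
    by (rule frontier_pieces_not_bridged[OF cu cd p1 ud fr conF neF Fud F1 S(1,2,4) _ _ x(1) _ x(3)
          y(1) _ y(3)])
       (use S(3) x(2) y(2) disj F2 in auto)
qed

definition subdrawing ::
  "'a set \<Rightarrow> 'e set \<Rightarrow> ('e \<Rightarrow> 'a set) \<Rightarrow> ('a \<Rightarrow> complex) \<Rightarrow> ('e \<Rightarrow> real \<Rightarrow> complex) \<Rightarrow> complex set"
  where "subdrawing W E ends p gam = p ` W \<union> (\<Union>e\<in>{e\<in>E. ends e \<subseteq> W}. path_image (gam e))"

lemma subdrawing_subset_drawing: "W \<subseteq> V \<Longrightarrow> subdrawing W E ends p gam \<subseteq> drawing V E p gam"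
  by (auto simp: subdrawing_def drawing_def)

lemma graph_edge_ends:
  assumes "graph V E ends" "e \<in> E"
  obtains x y where "x \<noteq> y" "ends e = {x, y}" "x \<in> V" "y \<in> V"
  using assms unfolding graph_def card_2_iff by blast

lemma plane_embedding_inj: "plane_embedding V E ends p gam \<Longrightarrow> inj_on p V"
  by (simp add: plane_embedding_def)

lemma plane_embedding_edge:
  assumes "plane_embedding V E ends p gam" "e \<in> E"
  shows "arc (gam e)"
    "\<exists>u v. ends e = {u, v} \<and> pathstart (gam e) = p u \<and> pathfinish (gam e) = p v"
    "path_image (gam e) \<inter> p ` V \<subseteq> p ` ends e"
  using assms(1)[unfolded plane_embedding_def, THEN conjunct2, THEN conjunct1, rule_format,
      OF assms(2)]
  by auto

lemma plane_embedding_crossing: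
  assumes "plane_embedding V E ends p gam" "e \<in> E" "f \<in> E" "e \<noteq> f"
  shows "path_image (gam e) \<inter> path_image (gam f) \<subseteq> p ` (ends e \<inter> ends f)"
  using assms(1)[unfolded plane_embedding_def, THEN conjunct2, THEN conjunct2, rule_format,
      OF assms(2-4)] .

lemma edge_arc_path:
  assumes emb: "plane_embedding V E ends p gam" and e: "e \<in> E" and vw: "ends e = {v, w}"
  obtains g where "path g" "pathstart g = p v" "pathfinish g = p w"
    "path_image g = path_image (gam e)"
proof -
  obtain x y where xy: "arc (gam e)" "ends e = {x, y}"
    "pathstart (gam e) = p x" "pathfinish (gam e) = p y"
    using plane_embedding_edge(1,2)[OF emb e] by blast
  have pe: "path (gam e)" using xy(1) by (rule arc_imp_path)
  from vw xy(2) have "(v = x \<and> w = y) \<or> (v = y \<and> w = x)" by (auto simp: doubleton_eq_iff)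
  thus thesis
  proof
    assume "v = x \<and> w = y"
    thus thesis using that[of "gam e"] pe xy by simp
  next
    assume "v = y \<and> w = x"
    thus thesis using that[of "reversepath (gam e)"] pe xy by simp
  qed
qed

lemma edge_arc_contains_ends:
  assumes "plane_embedding V E ends p gam" "e \<in> E"
  shows "p ` ends e \<subseteq> path_image (gam e)"
proof -
  obtain u v where "ends e = {u, v}" "pathstart (gam e) = p u" "pathfinish (gam e) = p v"
    using plane_embedding_edge(2)[OF assms] by blast
  thus ?thesis using pathstart_in_path_image[of "gam e"] pathfinish_in_path_image[of "gam e"]
    by auto
qed

lemma edge_arc_path_image_compact:
  assumes "plane_embedding V E ends p gam" "e \<in> E"
  shows "compact (path_image (gam e))"
proof -
  have "arc (gam e)" by (rule plane_embedding_edge(1)[OF assms])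
  thus ?thesis by (simp add: arc_imp_path compact_path_image)
qed

lemma vertex_on_edge_arc:
  assumes emb: "plane_embedding V E ends p gam" and gr: "graph V E ends"
    and a: "a \<in> V" and e: "e \<in> E" and on: "p a \<in> path_image (gam e)"
  shows "a \<in> ends e"
proof -
  have "p a \<in> p ` ends e" using plane_embedding_edge(3)[OF emb e] a on by blast
  moreover have "ends e \<subseteq> V" using gr e by (auto simp: graph_def)
  moreover have "inj_on p V" using emb by (rule plane_embedding_inj)
  ultimately show ?thesis using a by (auto dest: inj_onD)
qed

lemma reach_drawn_path:
  assumes emb: "plane_embedding V E ends p gam" and r: "reach W E ends a b"
  obtains g where "path g" "pathstart g = p a" "pathfinish g = p b"
    "path_image g \<subseteq> subdrawing W E ends p gam"
proof -
  from r have "\<exists>g. path g \<and> pathstart g = p a \<and> pathfinish g = p b \<and>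
      path_image g \<subseteq> subdrawing W E ends p gam"
  proof induction
    case (refl u)
    show ?case
      by (rule exI[of _ "\<lambda>t. p u"])
         (use refl in \<open>auto simp: subdrawing_def path_def pathstart_def pathfinish_def path_image_def\<close>)
  next
    case (step u v e w)
    then obtain g where g: "path g" "pathstart g = p u" "pathfinish g = p v"
      "path_image g \<subseteq> subdrawing W E ends p gam" by blast
    obtain h where h: "path h" "pathstart h = p v" "pathfinish h = p w"
      "path_image h = path_image (gam e)"
      using edge_arc_path[OF emb step.hyps(2,3)] by metis
    have "path_image h \<subseteq> subdrawing W E ends p gam"
      using h(4) step.hyps(2,4) by (auto simp: subdrawing_def)
    thus ?case using g h by (intro exI[of _ "g +++ h"]) (auto simp: path_image_join)
  qed
  thus thesis using that by blast
qed

text \<open>Subdrawings of disjoint vertex sets are disjoint: vertex images are distinct, a vertex only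
  lies on arcs of its own edges, and two distinct arcs meet only at common ends.\<close>

lemma subdrawings_disjoint:
  assumes emb: "plane_embedding V E ends p gam" and gr: "graph V E ends"
    and W: "W1 \<subseteq> V" "W2 \<subseteq> V" "W1 \<inter> W2 = {}"
  shows "subdrawing W1 E ends p gam \<inter> subdrawing W2 E ends p gam = {}"
proof -
  have inj: "inj_on p V" using emb by (rule plane_embedding_inj)
  have vertex_edge: "p a \<notin> path_image (gam f)"
    if "a \<in> Wi" "f \<in> E" "ends f \<subseteq> Wj" "Wi \<subseteq> V" "Wi \<inter> Wj = {}" for a f Wi Wj
  proof
    assume "p a \<in> path_image (gam f)"
    hence "a \<in> ends f" using vertex_on_edge_arc[OF emb gr _ that(2)] that(1,4) by blast
    thus False using that(1,3,5) by blast
  qed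
  have edge_edge: "path_image (gam e) \<inter> path_image (gam f) = {}"
    if "e \<in> E" "ends e \<subseteq> W1" "f \<in> E" "ends f \<subseteq> W2" for e f
  proof -
    have "ends e \<noteq> {}" using gr that(1) by (metis graph_edge_ends insert_not_empty)
    hence "e \<noteq> f" "ends e \<inter> ends f = {}" using that W by auto
    thus ?thesis using plane_embedding_crossing[OF emb that(1,3)] by blast
  qed
  have vertex_vertex: "p a \<noteq> p b" if "a \<in> W1" "b \<in> W2" for a b
    using inj that W by (metis disjoint_iff inj_on_contraD subsetD)
  show ?thesis
  proof (rule equals0I)
    fix z assume "z \<in> subdrawing W1 E ends p gam \<inter> subdrawing W2 E ends p gam"
    then consider
        a b where "a \<in> W1" "b \<in> W2" "z = p a" "z = p b"
      | a f where "a \<in> W1" "f \<in> E" "ends f \<subseteq> W2" "z = p a" "z \<in> path_image (gam f)"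
      | e b where "e \<in> E" "ends e \<subseteq> W1" "b \<in> W2" "z \<in> path_image (gam e)" "z = p b"
      | e f where "e \<in> E" "ends e \<subseteq> W1" "f \<in> E" "ends f \<subseteq> W2"
          "z \<in> path_image (gam e)" "z \<in> path_image (gam f)"
      unfolding subdrawing_def by blast
    thus False
    proof cases
      case 1 thus False using vertex_vertex by metis
    next
      case 2 thus False using vertex_edge[of _ W1 _ W2] W by metis
    next
      case 3 thus False using vertex_edge[of _ W2 _ W1] W by (metis Int_commute)
    next
      case 4 thus False using edge_edge by blast
    qed
  qed
qed

section \<open>Face boundary cycles\<close>

text \<open>Rotating both sequences of a cycle gives the same cycle, started at another vertex; this
  lets the cyclic order of four boundary vertices be handled as a linear order of indices.\<close>

lemma is_cycle_rotate:
  assumes cyc: "is_cycle V E ends vs es"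
  shows "is_cycle V E ends (rotate n vs) (rotate n es)"
proof -
  let ?L = "length vs"
  have L: "length es = ?L" "?L > 0" using cyc by (auto simp: is_cycle_def)
  have "ends (rotate n es ! q) = {rotate n vs ! q, rotate n vs ! ((q + 1) mod ?L)}"
    if q: "q < ?L" for q
  proof -
    have "(n + (q + 1) mod ?L) mod ?L = ((n + q) mod ?L + 1) mod ?L"
      by (metis add.assoc mod_add_left_eq mod_add_right_eq)
    moreover have "(n + q) mod ?L < ?L" using L by simp
    ultimately show ?thesis
      using cyc q L by (simp add: nth_rotate is_cycle_def)
  qed
  thus ?thesis using cyc L by (simp add: is_cycle_def)
qed

lemma cycle_segments_meet:
  assumes cyc: "is_cycle V E ends vs es" and ik: "i < k" "k < length vs"
    and q1: "q1 \<in> {i..<k}" and q2: "q2 \<in> {..<i} \<union> {k..<length vs}"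
    and v: "v \<in> ends (es ! q1)" "v \<in> ends (es ! q2)"
  shows "v = vs ! i \<or> v = vs ! k"
proof -
  let ?L = "length vs"
  have ends: "ends (es ! q) = {vs ! q, vs ! ((q + 1) mod ?L)}" if "q < ?L" for q
    using cyc that by (simp add: is_cycle_def)
  have "(q1 + 1) mod ?L = q1 + 1" using q1 ik by auto
  hence "v = vs ! q1 \<or> v = vs ! (q1 + 1)" using v(1) ends[of q1] q1 ik by auto
  then obtain a where a: "a = q1 \<or> a = q1 + 1" "v = vs ! a" by blast
  have "v = vs ! q2 \<or> v = vs ! ((q2 + 1) mod ?L)" using v(2) ends[of q2] q2 ik by auto
  then obtain b where b: "b = q2 \<or> b = (q2 + 1) mod ?L" "v = vs ! b" by blast
  have "a < ?L" "b < ?L" using a(1) b(1) q1 q2 ik by (auto intro: mod_less_divisor)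
  hence "a = b" using a(2) b(2) cyc by (simp add: is_cycle_def nth_eq_iff_index_eq)
  moreover have "(q2 + 1) mod ?L = 0 \<or> (q2 + 1) mod ?L = q2 + 1"
    using q2 ik by (cases "q2 + 1 = ?L") auto
  ultimately have "a = i \<or> a = k" using a(1) b(1) q1 q2 by auto
  thus ?thesis using a(2) by auto
qed

lemma cycle_drawing_split:
  assumes emb: "plane_embedding V E ends p gam" and cyc: "is_cycle V E ends vs es"
    and ijkl: "i < j" "j < k" "k < l" "l < length vs"
  obtains u d where "compact u" "compact d" "u \<union> d = (\<Union>e\<in>set es. path_image (gam e))"
    "u \<inter> d \<subseteq> {p (vs ! i), p (vs ! k)}" "p (vs ! j) \<in> u" "p (vs ! l) \<in> d"
proof -
  let ?L = "length vs"
  define arc_of where "arc_of q = path_image (gam (es ! q))" for q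
  define A where "A = {i..<k}"
  define B where "B = {..<i} \<union> {k..<?L}"
  have lens: "length es = ?L" using cyc by (simp add: is_cycle_def)
  have edge: "es ! q \<in> E" if "q < ?L" for q
    using cyc that lens by (metis is_cycle_def nth_mem subsetD)
  have ends: "ends (es ! q) = {vs ! q, vs ! ((q + 1) mod ?L)}" if "q < ?L" for q
    using cyc that by (simp add: is_cycle_def)
  have AB: "A \<union> B = {..<?L}" "A \<inter> B = {}" using ijkl by (auto simp: A_def B_def)
  have vertex_on: "p (vs ! q) \<in> arc_of q" if "q < ?L" for q
    using edge_arc_contains_ends[OF emb edge[OF that]] ends[OF that] by (auto simp: arc_of_def)
  show thesis
  proof
    have "compact (\<Union>q\<in>Q. arc_of q)" if "Q \<subseteq> {..<?L}" for Q
      using that finite_subset[OF that] edge_arc_path_image_compact[OF emb edge]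
      by (intro compact_UN) (auto simp: arc_of_def)
    thus "compact (\<Union>q\<in>A. arc_of q)" "compact (\<Union>q\<in>B. arc_of q)" using AB by auto
    have "(\<Union>q\<in>A. arc_of q) \<union> (\<Union>q\<in>B. arc_of q) = (\<Union>q<?L. path_image (gam (es ! q)))"
      using AB(1) by (auto simp: arc_of_def)
    also have "\<dots> = (\<Union>e\<in>set es. path_image (gam e))"
      using lens by (force simp: in_set_conv_nth)
    finally show "(\<Union>q\<in>A. arc_of q) \<union> (\<Union>q\<in>B. arc_of q) = (\<Union>e\<in>set es. path_image (gam e))" .
    show "(\<Union>q\<in>A. arc_of q) \<inter> (\<Union>q\<in>B. arc_of q) \<subseteq> {p (vs ! i), p (vs ! k)}"
    proof
      fix z assume "z \<in> (\<Union>q\<in>A. arc_of q) \<inter> (\<Union>q\<in>B. arc_of q)"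
      then obtain q1 q2 where q: "q1 \<in> A" "q2 \<in> B" "z \<in> arc_of q1" "z \<in> arc_of q2" by blast
      have qL: "q1 < ?L" "q2 < ?L" using q AB(1) by auto
      have "es ! q1 \<noteq> es ! q2"
        using q AB(2) qL cyc lens by (auto simp: is_cycle_def nth_eq_iff_index_eq)
      then obtain v where "v \<in> ends (es ! q1)" "v \<in> ends (es ! q2)" "z = p v"
        using plane_embedding_crossing[OF emb edge[OF qL(1)] edge[OF qL(2)]] q(3,4)
        unfolding arc_of_def by blast
      thus "z \<in> {p (vs ! i), p (vs ! k)}"
        using cycle_segments_meet[OF cyc _ _ q(1,2)[unfolded A_def B_def]] ijkl by auto
    qed
    show "p (vs ! j) \<in> (\<Union>q\<in>A. arc_of q)" using vertex_on[of j] ijkl by (auto simp: A_def)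
    show "p (vs ! l) \<in> (\<Union>q\<in>B. arc_of q)" using vertex_on[of l] ijkl by (auto simp: B_def)
  qed
qed

text \<open>The two walks would be drawn as disjoint paths, the first
  splitting the face boundary into the pieces through s2 and through t2, the second joining them.\<close>

lemma boundary_pairs_not_both_connected:
  assumes gr: "graph V E ends" and emb: "plane_embedding V E ends p gam"
    and face: "F \<in> faces V E p gam"
    and cyc: "is_cycle V E ends vs es" and bdry: "face_boundary_cycle gam F es"
    and order: "cyclic_order4 vs s1 s2 t1 t2"
    and Y: "Y \<subseteq> V" and r1: "reach Y E ends s1 t1" and r2: "reach (V - Y) E ends s2 t2"
  shows False
proof -
  obtain n i j k l where ijkl: "i < j" "j < k" "k < l" "l < length (rotate n vs)"
    and at: "rotate n vs ! i = s1" "rotate n vs ! j = s2" "rotate n vs ! k = t1"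
      "rotate n vs ! l = t2"
    using order unfolding cyclic_order4_def by auto
  obtain u d where ud: "compact u" "compact d"
    "u \<union> d = (\<Union>e\<in>set (rotate n es). path_image (gam e))"
    "u \<inter> d \<subseteq> {p s1, p t1}" "p s2 \<in> u" "p t2 \<in> d"
    using cycle_drawing_split[OF emb is_cycle_rotate[OF cyc] ijkl] unfolding at by metis
  obtain g1 where g1: "path g1" "pathstart g1 = p s1" "pathfinish g1 = p t1"
    "path_image g1 \<subseteq> subdrawing Y E ends p gam"
    using reach_drawn_path[OF emb r1] by metis
  obtain g2 where g2: "path g2" "pathstart g2 = p s2" "pathfinish g2 = p t2"
    "path_image g2 \<subseteq> subdrawing (V - Y) E ends p gam"
    using reach_drawn_path[OF emb r2] by metis
  have Fdrawing: "F \<inter> drawing V E p gam = {}"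
    using face in_components_subset unfolding faces_def by blast
  have "u \<union> d \<subseteq> drawing V E p gam"
    using ud(3) cyc by (auto simp: drawing_def is_cycle_def)
  hence Fud: "F \<inter> (u \<union> d) = {}" using Fdrawing by blast
  have "path_image g1 \<subseteq> drawing V E p gam" "path_image g2 \<subseteq> drawing V E p gam"
    using g1(4) g2(4) subdrawing_subset_drawing[OF Y, of E ends p gam]
      subdrawing_subset_drawing[of "V - Y" V E ends p gam] by auto
  hence F1: "F \<inter> path_image g1 = {}" and F2: "F \<inter> path_image g2 = {}"
    using Fdrawing by blast+
  have glue: "u \<inter> d \<subseteq> path_image g1"
    using ud(4) g1(2,3) pathstart_in_path_image[of g1] pathfinish_in_path_image[of g1] by auto
  have disj: "path_image g1 \<inter> path_image g2 = {}"
    using g1(4) g2(4) subdrawings_disjoint[OF emb gr Y, of "V - Y"] by auto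
  have fr: "frontier F = u \<union> d" using bdry ud(3) by (simp add: face_boundary_cycle_def)
  have conF: "connected F" and neF: "F \<noteq> {}"
    using face in_components_connected in_components_nonempty unfolding faces_def by blast+
  show False
    by (rule no_second_chord[OF ud(1,2) g1(1) g2(1) glue fr conF neF Fud F1 F2 disj])
       (use ud(5,6) g2(2,3) in auto)
qed

section \<open>Cuts and surplus\<close>

lemma card_pair_Int_eq_1 [simp]:
  assumes "x \<noteq> y"
  shows "card ({x, y} \<inter> X) = 1 \<longleftrightarrow> (x \<in> X) \<noteq> (y \<in> X)"
    and "card ({x, y} \<inter> X) = Suc 0 \<longleftrightarrow> (x \<in> X) \<noteq> (y \<in> X)"
  using assms by (cases "x \<in> X"; cases "y \<in> X"; simp)+

lemma delta_G_complement:
  assumes gr: "graph V E ends" and X: "X \<subseteq> V"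
  shows "delta_G E ends (V - X) = delta_G E ends X"
proof -
  have "card (ends e \<inter> (V - X)) = 1 \<longleftrightarrow> card (ends e \<inter> X) = 1" if e: "e \<in> E" for e
  proof -
    obtain x y where "x \<noteq> y" "ends e = {x, y}" "x \<in> V" "y \<in> V"
      using graph_edge_ends[OF gr e] .
    thus ?thesis by auto
  qed
  thus ?thesis unfolding delta_G_def by auto
qed

lemma delta_H_complement:
  assumes P: "\<forall>h\<in>P. \<exists>u v. u \<in> V \<and> v \<in> V \<and> u \<noteq> v \<and> h = {u, v}"
  shows "delta_H P (V - X) = delta_H P X"
proof -
  have "card (h \<inter> (V - X)) = 1 \<longleftrightarrow> card (h \<inter> X) = 1" if "h \<in> P" for h
    using P that by auto
  thus ?thesis unfolding delta_H_def by auto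
qed

lemma multiflow_instance_finite_demands:
  assumes "multiflow_instance V E ends H r c"
  shows "finite H"
proof -
  have Hp: "\<forall>h\<in>H. \<exists>u v. u \<in> V \<and> v \<in> V \<and> u \<noteq> v \<and> h = {u, v}" and "finite V"
    using assms by (simp_all add: multiflow_instance_def graph_def)
  moreover have "H \<subseteq> Pow V"
  proof
    fix h assume "h \<in> H"
    then obtain u v where "u \<in> V" "v \<in> V" "h = {u, v}" using Hp by blast
    thus "h \<in> Pow V" by auto
  qed
  ultimately show ?thesis by (meson finite_Pow_iff finite_subset)
qed

lemma reach_in_set: "reach W E ends u v \<Longrightarrow> v \<in> W"
  by (induction rule: reach.induct) auto

lemma delta_G_split:
  assumes gr: "graph V E ends" and AY: "A \<subseteq> Y"
    and closed: "\<And>e x y. e \<in> E \<Longrightarrow> ends e = {x, y} \<Longrightarrow> x \<in> A \<Longrightarrow> y \<in> Y \<Longrightarrow> y \<in> A"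
  shows "delta_G E ends Y = delta_G E ends A \<union> delta_G E ends (Y - A)"
    "delta_G E ends A \<inter> delta_G E ends (Y - A) = {}"
proof -
  have "(card (ends e \<inter> Y) = 1 \<longleftrightarrow> card (ends e \<inter> A) = 1 \<or> card (ends e \<inter> (Y - A)) = 1) \<and>
      \<not> (card (ends e \<inter> A) = 1 \<and> card (ends e \<inter> (Y - A)) = 1)" if e: "e \<in> E" for e
  proof -
    obtain x y where xy: "x \<noteq> y" "ends e = {x, y}" using graph_edge_ends[OF gr e] by metis
    have "ends e = {y, x}" using xy(2) by (simp add: insert_commute)
    hence "x \<in> A \<Longrightarrow> y \<in> Y \<Longrightarrow> y \<in> A" "y \<in> A \<Longrightarrow> x \<in> Y \<Longrightarrow> x \<in> A"
      using closed[OF e xy(2)] closed[OF e] by blast+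
    thus ?thesis using xy AY by auto
  qed
  thus "delta_G E ends Y = delta_G E ends A \<union> delta_G E ends (Y - A)"
    "delta_G E ends A \<inter> delta_G E ends (Y - A) = {}"
    unfolding delta_G_def by blast+
qed

text \<open>If both ends of a demand pair {a, b} lie in Y but b is not reachable from a inside Y, then
  the cut of Y has surplus at least 2 r{a,b}: the cut condition for A (the part reachable from a)
  and for Y - A each count {a, b}, which does not cross the cut of Y.\<close>

lemma disconnected_pair_surplus:
  assumes inst: "multiflow_instance V E ends H r c" and cut: "cut_condition V E ends H r c"
    and Y: "Y \<subseteq> V" and ab: "a \<in> Y" "b \<in> Y" "{a, b} \<in> H" and nr: "\<not> reach Y E ends a b"
  shows "(\<Sum>e\<in>delta_G E ends Y. c e) \<ge> (\<Sum>h\<in>delta_H H Y. r h) + 2 * r {a, b}"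
proof -
  have gr: "graph V E ends" and fE: "finite E" and r_nonneg: "\<And>h. h \<in> H \<Longrightarrow> 0 \<le> r h"
    and Hp: "\<forall>h\<in>H. \<exists>u v. u \<in> V \<and> v \<in> V \<and> u \<noteq> v \<and> h = {u, v}"
    using inst by (auto simp: multiflow_instance_def graph_def less_imp_le)
  have fd: "finite (delta_H H X)" for X
    using multiflow_instance_finite_demands[OF inst] by (simp add: delta_H_def)
  define A where "A = {v. reach Y E ends a v}"
  define B where "B = Y - A"
  have AY: "A \<subseteq> Y" using reach_in_set by (auto simp: A_def)
  have aA: "a \<in> A" using ab by (auto simp: A_def intro: reach.refl)
  have bB: "b \<in> B" and abne: "a \<noteq> b" using ab nr aA by (auto simp: A_def B_def)
  have closed: "y \<in> A" if "e \<in> E" "ends e = {x, y}" "x \<in> A" "y \<in> Y" for e x y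
  proof -
    have "reach Y E ends a x" "ends e \<subseteq> Y" using that AY by (auto simp: A_def)
    thus "y \<in> A" using reach.step[of Y E ends a x e y] that by (simp add: A_def)
  qed
  have capY: "(\<Sum>e\<in>delta_G E ends Y. c e) = (\<Sum>e\<in>delta_G E ends A. c e) + (\<Sum>e\<in>delta_G E ends B. c e)"
    using delta_G_split[OF gr AY closed] fE unfolding B_def
    by (simp add: delta_G_def sum.union_disjoint)
  have cutA: "(\<Sum>e\<in>delta_G E ends A. c e) \<ge> (\<Sum>h\<in>delta_H H A. r h)"
    and cutB: "(\<Sum>e\<in>delta_G E ends B. c e) \<ge> (\<Sum>h\<in>delta_H H B. r h)"
    using cut AY Y unfolding cut_condition_def B_def by (meson Diff_subset order_trans)+
  have "delta_H H Y \<subseteq> delta_H H A \<union> delta_H H B" using Hp AY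
    by (fastforce simp: delta_H_def B_def)
  moreover have ab_AB: "{a, b} \<in> delta_H H A \<inter> delta_H H B" and ab_Y: "{a, b} \<notin> delta_H H Y"
    using ab aA bB abne by (auto simp: delta_H_def B_def)
  ultimately have "r {a, b} + (\<Sum>h\<in>delta_H H Y. r h) \<le> (\<Sum>h\<in>delta_H H A \<union> delta_H H B. r h)"
    using fd r_nonneg
    by (subst sum.insert[OF fd ab_Y, symmetric]) (intro sum_mono2; auto simp: delta_H_def)
  moreover have "r {a, b} \<le> (\<Sum>h\<in>delta_H H A \<inter> delta_H H B. r h)"
    using ab_AB fd r_nonneg by (intro member_le_sum) (auto simp: delta_H_def)
  moreover have "(\<Sum>h\<in>delta_H H A. r h) + (\<Sum>h\<in>delta_H H B. r h)
      = (\<Sum>h\<in>delta_H H A \<union> delta_H H B. r h) + (\<Sum>h\<in>delta_H H A \<inter> delta_H H B. r h)"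
    using fd by (simp add: sum.union_inter)
  ultimately show ?thesis using capY cutA cutB by simp
qed

definition crossing :: "'a set \<Rightarrow> 'a \<Rightarrow> 'a \<Rightarrow> real" where
  "crossing X u v = (if (u \<in> X) \<noteq> (v \<in> X) then 1 else 0)"

lemma pos_pairs_demand:
  assumes D: "finite D" "\<forall>h\<in>D. \<exists>u v. u \<in> V \<and> v \<in> V \<and> u \<noteq> v \<and> h = {u, v}"
    and nonneg: "\<And>h. 0 \<le> f h" and supp: "\<And>h. h \<notin> D \<Longrightarrow> f h = 0"
  shows "(\<Sum>h\<in>delta_H (pos_pairs V f) X. f h) = (\<Sum>h\<in>delta_H D X. f h)"
proof (rule sum.mono_neutral_left)
  show "finite (delta_H D X)" using D(1) by (simp add: delta_H_def)
  have "pos_pairs V f \<subseteq> D" using supp by (force simp: pos_pairs_def)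
  thus "delta_H (pos_pairs V f) X \<subseteq> delta_H D X" by (auto simp: delta_H_def)
  show "\<forall>h\<in>delta_H D X - delta_H (pos_pairs V f) X. f h = 0"
  proof
    fix h assume h: "h \<in> delta_H D X - delta_H (pos_pairs V f) X"
    hence "h \<in> D" "h \<notin> pos_pairs V f" by (auto simp: delta_H_def)
    hence "\<not> f h > 0" using D(2) by (auto simp: pos_pairs_def)
    thus "f h = 0" using nonneg[of h] by simp
  qed
qed

text \<open>The swap as a signed modification of the extended requests: r' = r + m w, where the weight w
  is -1 on the old pairs {s1,t1}, {s2,t2}, +1 on the new pairs {s1,s2}, {t1,t2}, and 0 elsewhere.\<close>

definition swap_weight :: "'a \<Rightarrow> 'a \<Rightarrow> 'a \<Rightarrow> 'a \<Rightarrow> 'a set \<Rightarrow> real" where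
  "swap_weight s1 t1 s2 t2 h =
     (if h = {s1, t1} \<or> h = {s2, t2} then -1 else if h = {s1, s2} \<or> h = {t1, t2} then 1 else 0)"

lemma distinct_swap_pairs:
  assumes "distinct [s1, s2, t1, t2]"
  shows "{s1, t1} \<noteq> {s2, t2}" "{s1, t1} \<noteq> {s1, s2}" "{s1, t1} \<noteq> {t1, t2}"
    "{s2, t2} \<noteq> {s1, s2}" "{s2, t2} \<noteq> {t1, t2}" "{s1, s2} \<noteq> {t1, t2}"
  using assms by (auto simp: doubleton_eq_iff)

lemma swap_req_eq:
  assumes "distinct [s1, s2, t1, t2]"
  shows "swap_req H r s1 t1 s2 t2 h
    = ext_req H r h + min (r {s1, t1}) (r {s2, t2}) * swap_weight s1 t1 s2 t2 h"
  using distinct_swap_pairs[OF assms] by (simp add: swap_req_def swap_weight_def Let_def)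

lemma swap_weight_across:
  assumes dist: "distinct [s1, s2, t1, t2]" and D: "finite D"
    and K: "K = {{s1, t1}, {s2, t2}, {s1, s2}, {t1, t2}}" "K \<subseteq> D"
  shows "(\<Sum>h\<in>delta_H D X. swap_weight s1 t1 s2 t2 h)
    = crossing X s1 s2 + crossing X t1 t2 - crossing X s1 t1 - crossing X s2 t2"
proof -
  let ?w = "swap_weight s1 t1 s2 t2"
  have "(\<Sum>h\<in>delta_H D X. ?w h) = (\<Sum>h\<in>delta_H D X \<inter> K. ?w h)"
    using D by (intro sum.mono_neutral_right) (auto simp: swap_weight_def K delta_H_def)
  also have "delta_H D X \<inter> K = {h\<in>K. card (h \<inter> X) = 1}" using K(2) by (auto simp: delta_H_def)
  also have "(\<Sum>h\<in>\<dots>. ?w h) = (\<Sum>h\<in>K. if card (h \<inter> X) = 1 then ?w h else 0)"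
    by (rule sum.inter_filter) (simp add: K)
  also have "\<dots> = crossing X s1 s2 + crossing X t1 t2 - crossing X s1 t1 - crossing X s2 t2"
    using distinct_swap_pairs[OF dist] dist by (simp add: K swap_weight_def crossing_def)
  finally show ?thesis .
qed

text \<open>All requests of r' stay nonnegative, so dropping the zero ones (pos_pairs) does
  not matter.\<close>

lemma swap_req_demand:
  assumes inst: "multiflow_instance V E ends H r c"
    and d1: "{s1, t1} \<in> H" and d2: "{s2, t2} \<in> H" and dist: "distinct [s1, s2, t1, t2]"
  shows "(\<Sum>h\<in>delta_H (pos_pairs V (swap_req H r s1 t1 s2 t2)) X. swap_req H r s1 t1 s2 t2 h)
    = (\<Sum>h\<in>delta_H H X. r h) + min (r {s1, t1}) (r {s2, t2}) *
        (crossing X s1 s2 + crossing X t1 t2 - crossing X s1 t1 - crossing X s2 t2)"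
proof -
  let ?r' = "swap_req H r s1 t1 s2 t2" and ?w = "swap_weight s1 t1 s2 t2"
  let ?m = "min (r {s1, t1}) (r {s2, t2})"
  define K where "K = {{s1, t1}, {s2, t2}, {s1, s2}, {t1, t2}}"
  define D where "D = H \<union> K"
  have fH: "finite H" using multiflow_instance_finite_demands[OF inst] .
  have rpos: "\<And>h. h \<in> H \<Longrightarrow> r h > 0"
    and Hp: "\<forall>h\<in>H. \<exists>u v. u \<in> V \<and> v \<in> V \<and> u \<noteq> v \<and> h = {u, v}"
    using inst by (simp_all add: multiflow_instance_def)
  have inV: "s1 \<in> V" "t1 \<in> V" "s2 \<in> V" "t2 \<in> V"
    using Hp d1 d2 by (auto simp: doubleton_eq_iff)
  have fD: "finite D" using fH by (simp add: D_def K_def)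
  have Dp: "\<forall>h\<in>D. \<exists>u v. u \<in> V \<and> v \<in> V \<and> u \<noteq> v \<and> h = {u, v}"
    using Hp inV dist by (auto simp: D_def K_def)
  have r'_nonneg: "0 \<le> ?r' h" for h
    using swap_req_eq[OF dist, of H r h] rpos[OF d1] rpos[OF d2] d1 d2 rpos[of h]
    by (auto simp: swap_weight_def ext_req_def)
  have "(\<Sum>h\<in>delta_H (pos_pairs V ?r') X. ?r' h) = (\<Sum>h\<in>delta_H D X. ?r' h)"
    by (rule pos_pairs_demand[OF fD Dp r'_nonneg])
       (auto simp: swap_req_eq[OF dist] D_def K_def ext_req_def swap_weight_def)
  also have "\<dots> = (\<Sum>h\<in>delta_H D X. ext_req H r h) + ?m * (\<Sum>h\<in>delta_H D X. ?w h)"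
    by (simp add: swap_req_eq[OF dist] sum.distrib sum_distrib_left)
  also have "(\<Sum>h\<in>delta_H D X. ext_req H r h) = (\<Sum>h\<in>delta_H H X. r h)"
  proof -
    have "(\<Sum>h\<in>delta_H D X. ext_req H r h) = (\<Sum>h\<in>delta_H H X. ext_req H r h)"
      using fD by (intro sum.mono_neutral_right) (auto simp: delta_H_def D_def ext_req_def)
    thus ?thesis by (simp add: delta_H_def ext_req_def)
  qed
  also have "(\<Sum>h\<in>delta_H D X. ?w h)
      = crossing X s1 s2 + crossing X t1 t2 - crossing X s1 t1 - crossing X s2 t2"
    by (rule swap_weight_across[OF dist fD K_def]) (simp add: D_def)
  finally show ?thesis .
qed

lemma crossing_balance:
  "crossing X s1 s2 + crossing X t1 t2 - crossing X s1 t1 - crossing X s2 t2 \<le> 2"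
  "\<not> (s1 \<in> X \<and> t1 \<in> X \<and> s2 \<notin> X \<and> t2 \<notin> X) \<Longrightarrow> \<not> (s1 \<notin> X \<and> t1 \<notin> X \<and> s2 \<in> X \<and> t2 \<in> X)
    \<Longrightarrow> crossing X s1 s2 + crossing X t1 t2 - crossing X s1 t1 - crossing X s2 t2 \<le> 0"
  unfolding crossing_def
  by (cases "s1 \<in> X"; cases "t1 \<in> X"; cases "s2 \<in> X"; cases "t2 \<in> X"; simp)+

text \<open>Up to replacing X by its
  complement (which has the same cut), s1, t1 \<in> X and s2, t2 \<notin> X. By non-crossing, s1 and t1
  are disconnected inside X, or s2 and t2 are disconnected inside V - X, and the surplus lemma
  applies to X, resp. to V - X.\<close>

lemma separating_cut_surplus:
  assumes inst: "multiflow_instance V E ends H r c"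
    and emb: "plane_embedding V E ends p gam" and face: "F \<in> faces V E p gam"
    and cyc: "is_cycle V E ends vs es" and bdry: "face_boundary_cycle gam F es"
    and d1: "{s1, t1} \<in> H" and d2: "{s2, t2} \<in> H"
    and order: "cyclic_order4 vs s1 s2 t1 t2"
    and cut: "cut_condition V E ends H r c"
    and X: "X \<subseteq> V"
    and sep: "s1 \<in> X \<and> t1 \<in> X \<and> s2 \<notin> X \<and> t2 \<notin> X \<or> s1 \<notin> X \<and> t1 \<notin> X \<and> s2 \<in> X \<and> t2 \<in> X"
  shows "(\<Sum>e\<in>delta_G E ends X. c e)
    \<ge> (\<Sum>h\<in>delta_H H X. r h) + 2 * min (r {s1, t1}) (r {s2, t2})"
proof -
  let ?cap = "\<lambda>X. \<Sum>e\<in>delta_G E ends X. c e" and ?dem = "\<lambda>X. \<Sum>h\<in>delta_H H X. r h"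
  let ?m = "min (r {s1, t1}) (r {s2, t2})"
  have gr: "graph V E ends" and Hp: "\<forall>h\<in>H. \<exists>u v. u \<in> V \<and> v \<in> V \<and> u \<noteq> v \<and> h = {u, v}"
    using inst by (simp_all add: multiflow_instance_def)
  have inV: "s1 \<in> V" "t1 \<in> V" "s2 \<in> V" "t2 \<in> V"
    using Hp d1 d2 by (auto simp: doubleton_eq_iff)
  have symmetric: "?cap (V - Y) = ?cap Y" "?dem (V - Y) = ?dem Y" if "Y \<subseteq> V" for Y
    using delta_G_complement[OF gr that] delta_H_complement[OF Hp, of Y] by simp_all
  have oriented: "?cap Y \<ge> ?dem Y + 2 * ?m"
    if Y: "Y \<subseteq> V" "s1 \<in> Y" "t1 \<in> Y" "s2 \<in> V - Y" "t2 \<in> V - Y" for Y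
  proof -
    have "\<not> reach Y E ends s1 t1 \<or> \<not> reach (V - Y) E ends s2 t2"
      using boundary_pairs_not_both_connected[OF gr emb face cyc bdry order Y(1)] by blast
    thus ?thesis
    proof
      assume "\<not> reach Y E ends s1 t1"
      thus ?thesis using disconnected_pair_surplus[OF inst cut Y(1-3) d1] by linarith
    next
      assume "\<not> reach (V - Y) E ends s2 t2"
      hence "?cap (V - Y) \<ge> ?dem (V - Y) + 2 * r {s2, t2}"
        using disconnected_pair_surplus[OF inst cut Diff_subset Y(4,5) d2] by simp
      thus ?thesis using symmetric[OF Y(1)] by (simp add: min.coboundedI2)
    qed
  qed
  show ?thesis
  proof (cases "s1 \<in> X")
    case True
    hence "s1 \<in> X" "t1 \<in> X" "s2 \<in> V - X" "t2 \<in> V - X" using sep inV by auto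
    thus ?thesis by (rule oriented[OF X])
  next
    case False
    hence "s1 \<in> V - X" "t1 \<in> V - X" "s2 \<in> V - (V - X)" "t2 \<in> V - (V - X)"
      using sep inV X by auto
    hence "?cap (V - X) \<ge> ?dem (V - X) + 2 * ?m" by (rule oriented[OF Diff_subset])
    thus ?thesis using symmetric[OF X] by simp
  qed
qed

theorem lemma1:
  fixes V :: "'a set" and E :: "'e set" and ends :: "'e \<Rightarrow> 'a set"
    and p :: "'a \<Rightarrow> complex" and gam :: "'e \<Rightarrow> real \<Rightarrow> complex"
    and H :: "'a set set" and r :: "'a set \<Rightarrow> real" and c :: "'e \<Rightarrow> real"
    and s1 t1 s2 t2 :: 'a and F :: "complex set" and vs :: "'a list" and es :: "'e list"
  assumes inst: "multiflow_instance V E ends H r c"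
    and two_conn: "two_connected V E ends"
    and emb: "plane_embedding V E ends p gam"
    and face: "F \<in> faces V E p gam"
    and cyc: "is_cycle V E ends vs es"
    and bdry: "face_boundary_cycle gam F es"
    and d1: "{s1, t1} \<in> H" and d2: "{s2, t2} \<in> H"
    and dist: "distinct [s1, s2, t1, t2]"
    and order: "cyclic_order4 vs s1 s2 t1 t2"
    and cut: "cut_condition V E ends H r c"
  shows "cut_condition V E ends (pos_pairs V (swap_req H r s1 t1 s2 t2)) (swap_req H r s1 t1 s2 t2) c"
  unfolding cut_condition_def
proof (intro allI impI)
  fix X assume X: "X \<subseteq> V"
  let ?r' = "swap_req H r s1 t1 s2 t2" and ?m = "min (r {s1, t1}) (r {s2, t2})"
  let ?balance = "crossing X s1 s2 + crossing X t1 t2 - crossing X s1 t1 - crossing X s2 t2"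
  let ?cap = "\<Sum>e\<in>delta_G E ends X. c e" and ?dem = "\<Sum>h\<in>delta_H H X. r h"
  have m_pos: "0 < ?m" using inst d1 d2 by (simp add: multiflow_instance_def)
  have "(\<Sum>h\<in>delta_H (pos_pairs V ?r') X. ?r' h) = ?dem + ?m * ?balance"
    by (rule swap_req_demand[OF inst d1 d2 dist])
  moreover have "?dem + ?m * ?balance \<le> ?cap"
  proof (cases "s1 \<in> X \<and> t1 \<in> X \<and> s2 \<notin> X \<and> t2 \<notin> X \<or> s1 \<notin> X \<and> t1 \<notin> X \<and> s2 \<in> X \<and> t2 \<in> X")
    case True
    hence "?dem + 2 * ?m \<le> ?cap"
      by (rule separating_cut_surplus[OF inst emb face cyc bdry d1 d2 order cut X])
    moreover have "?m * ?balance \<le> ?m * 2"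
      using crossing_balance(1)[of X s1 s2 t1 t2] m_pos by (intro mult_left_mono) auto
    ultimately show ?thesis by linarith
  next
    case False
    hence "?m * ?balance \<le> 0"
      using crossing_balance(2)[of s1 X t1 s2 t2] m_pos by (simp add: mult_nonneg_nonpos)
    moreover have "?dem \<le> ?cap" using cut X by (simp add: cut_condition_def)
    ultimately show ?thesis by linarith
  qed
  ultimately show "(\<Sum>h\<in>delta_H (pos_pairs V ?r') X. ?r' h) \<le> ?cap" by linarith
qed

end
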